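(* Let $A$ be a non-negative $d\times d$ matrix with $\rho(A)>1$. If $X$ is a local minimum of problem (P), then $X\le A$ entrywise and $\rho(X)=1$.
   Context: $\rho(\cdot)$ denotes spectral radius and $\|\cdot\|$ the Frobenius norm $\|X\|=\sqrt{\sum_{i,j}x_{ij}^2}$. Problem (P) for a non-negative square matrix $A$ is: minimize $\|X-A\|$ subject to $X\ge 0$ (entrywise) and $\rho(X)\le1$. A local minimum of (P) is a feasible $X$ for which there is a neighbourhood $U$ of $X$ with $\|Y-A\|\ge\|X-A\|$ for all feasible $Y\in U$. *)

theory Defs
  imports "Jordan_Normal_Form.Spectral_Radius"
begin

definition frob_norm :: "real mat \<Rightarrow> real" where
  "frob_norm X = sqrt (\<Sum>i<dim_row X. \<Sum>j<dim_col X. (X $$ (i,j))^2)"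

definition nonneg_mat :: "real mat \<Rightarrow> bool" where
  "nonneg_mat X \<longleftrightarrow> (\<forall>i<dim_row X. \<forall>j<dim_col X. X $$ (i,j) \<ge> 0)"

definition rho :: "real mat \<Rightarrow> real" where
  "rho X = spectral_radius (map_mat complex_of_real X)"

definition feasible_P :: "nat \<Rightarrow> real mat \<Rightarrow> bool" where
  "feasible_P d X \<longleftrightarrow> X \<in> carrier_mat d d \<and> nonneg_mat X \<and> rho X \<le> 1"

definition local_min_P :: "nat \<Rightarrow> real mat \<Rightarrow> real mat \<Rightarrow> bool" where
  "local_min_P d A X \<longleftrightarrow> feasible_P d X \<and>
     (\<exists>e>0. \<forall>Y. feasible_P d Y \<and> frob_norm (Y - X) < e \<longrightarrow> frob_norm (X - A) \<le> frob_norm (Y - A))"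

end

theory Submission
  imports Defs
begin

text \<open>
  Both claims follow by moving a local minimum X a little along a segment X + t (B - X) that stays
  feasible and gets strictly closer to A. If some entry of X exceeds the corresponding entry of A,
  lower just that entry towards A: the matrix stays nonnegative and entrywise below X, so by
  monotonicity of the spectral radius on nonnegative matrices it stays feasible. If rho X < 1, move
  towards A itself, which shrinks the distance by the factor 1 - t; feasibility for small t comes
  from upper semicontinuity of the spectral radius, obtained by combining the Jordan-form bound
  |(L^k)_ij| \<le> c s^k (any s > rho L) with rho(P)^k \<le> d max |(P^k)_ij|. Here X \<noteq> A because
  rho A > 1 \<ge> rho X.
\<close>

lemma frob_norm_carrier:
  "M \<in> carrier_mat d d \<Longrightarrow> frob_norm M = sqrt (\<Sum>p\<in>{..<d}\<times>{..<d}. (M $$ p)^2)"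
  unfolding frob_norm_def by (simp add: sum.cartesian_product)

lemma frob_norm_smult: "frob_norm (c \<cdot>\<^sub>m M) = \<bar>c\<bar> * frob_norm M"
  by (simp add: frob_norm_def power_mult_distrib sum_distrib_left[symmetric] real_sqrt_mult)

lemma frob_norm_strict_mono:
  assumes M: "M \<in> carrier_mat d d" and N: "N \<in> carrier_mat d d"
    and le: "\<And>a b. a < d \<Longrightarrow> b < d \<Longrightarrow> \<bar>M $$ (a,b)\<bar> \<le> \<bar>N $$ (a,b)\<bar>"
    and ij: "i < d" "j < d" and lt: "\<bar>M $$ (i,j)\<bar> < \<bar>N $$ (i,j)\<bar>"
  shows "frob_norm M < frob_norm N"
proof -
  have "(\<Sum>p\<in>{..<d}\<times>{..<d}. (M $$ p)^2) < (\<Sum>p\<in>{..<d}\<times>{..<d}. (N $$ p)^2)"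
  proof (rule sum_strict_mono_ex1)
    show "\<forall>p\<in>{..<d}\<times>{..<d}. (M $$ p)^2 \<le> (N $$ p)^2"
      using le by (auto simp: abs_le_square_iff)
    show "\<exists>p\<in>{..<d}\<times>{..<d}. (M $$ p)^2 < (N $$ p)^2"
      using ij lt by (intro bexI[of _ "(i,j)"]) (auto simp: abs_le_square_iff[symmetric] not_le[symmetric])
  qed simp
  then show ?thesis by (simp add: frob_norm_carrier[OF M] frob_norm_carrier[OF N])
qed

lemma mat_pow_Suc_index:
  assumes "X \<in> carrier_mat d d" and "i < d" and "j < d"
  shows "(X ^\<^sub>m Suc k) $$ (i,j) = (\<Sum>l<d. (X ^\<^sub>m k) $$ (i,l) * X $$ (l,j))"
  using assms by (simp add: scalar_prod_def atLeast0LessThan)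

lemma mat_pow_smult:
  fixes X :: "'a :: comm_ring_1 mat"
  assumes "X \<in> carrier_mat d d"
  shows "(a \<cdot>\<^sub>m X) ^\<^sub>m k = a ^ k \<cdot>\<^sub>m X ^\<^sub>m k"
proof (induction k)
  case (Suc k)
  then show ?case
    using assms by (intro eq_matI) (auto simp: scalar_prod_def sum_distrib_left mult_ac intro!: sum.cong)
qed (auto intro!: eq_matI)

lemma mat_pow_index_mono:
  fixes X Y :: "'a :: linordered_semidom mat"
  assumes X: "X \<in> carrier_mat d d" and Y: "Y \<in> carrier_mat d d"
    and le: "\<And>a b. a < d \<Longrightarrow> b < d \<Longrightarrow> 0 \<le> Y $$ (a,b) \<and> Y $$ (a,b) \<le> X $$ (a,b)"
    and ij: "i < d" "j < d"
  shows "0 \<le> (Y ^\<^sub>m k) $$ (i,j) \<and> (Y ^\<^sub>m k) $$ (i,j) \<le> (X ^\<^sub>m k) $$ (i,j)"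
  using ij
proof (induction k arbitrary: i j)
  case 0
  then show ?case using X Y by simp
next
  case (Suc k)
  have "(\<Sum>l<d. (Y ^\<^sub>m k) $$ (i,l) * Y $$ (l,j)) \<le> (\<Sum>l<d. (X ^\<^sub>m k) $$ (i,l) * X $$ (l,j))"
    using Suc le by (intro sum_mono mult_mono) (force intro: order_trans)+
  moreover have "0 \<le> (\<Sum>l<d. (Y ^\<^sub>m k) $$ (i,l) * Y $$ (l,j))"
    using Suc le by (intro sum_nonneg) auto
  ultimately show ?case
    using mat_pow_Suc_index[OF X Suc.prems] mat_pow_Suc_index[OF Y Suc.prems] by simp
qed

lemma tendsto_mat_pow_index:
  fixes P :: "'b \<Rightarrow> real mat"
  assumes P: "\<And>t. P t \<in> carrier_mat d d" and L: "L \<in> carrier_mat d d"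
    and lim: "\<And>a b. a < d \<Longrightarrow> b < d \<Longrightarrow> ((\<lambda>t. P t $$ (a,b)) \<longlongrightarrow> L $$ (a,b)) F"
    and ij: "i < d" "j < d"
  shows "((\<lambda>t. (P t ^\<^sub>m k) $$ (i,j)) \<longlongrightarrow> (L ^\<^sub>m k) $$ (i,j)) F"
  using ij
proof (induction k arbitrary: i j)
  case 0
  have "dim_row (P t) = d" for t using P[of t] by simp
  then show ?case using 0 L by simp
next
  case (Suc k)
  have "((\<lambda>t. \<Sum>l<d. (P t ^\<^sub>m k) $$ (i,l) * P t $$ (l,j)) \<longlongrightarrow>
      (\<Sum>l<d. (L ^\<^sub>m k) $$ (i,l) * L $$ (l,j))) F"
    using Suc lim by (intro tendsto_sum tendsto_mult) auto
  then show ?case using mat_pow_Suc_index[OF P Suc.prems] mat_pow_Suc_index[OF L Suc.prems] by simp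
qed

lemma rho_nonneg: "X \<in> carrier_mat d d \<Longrightarrow> 0 < d \<Longrightarrow> 0 \<le> rho X"
  unfolding rho_def using spectral_radius_mem_max(1)[of "map_mat complex_of_real X" d] by auto

lemma rho_pow_le_index_bound:
  assumes Y: "Y \<in> carrier_mat d d" and d: "0 < d"
    and b: "\<And>i j. i < d \<Longrightarrow> j < d \<Longrightarrow> \<bar>(Y ^\<^sub>m k) $$ (i,j)\<bar> \<le> b"
  shows "rho Y ^ k \<le> d * b"
proof -
  define M where "M = map_mat complex_of_real Y"
  have M: "M \<in> carrier_mat d d" using Y unfolding M_def by auto
  obtain lam where "lam \<in> spectrum M" and r: "rho Y = norm lam"
    using spectral_radius_mem_max(1)[OF M d] unfolding rho_def M_def[symmetric] by auto
  then obtain v where ev: "eigenvector M v lam" unfolding spectrum_def eigenvalue_def by auto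
  have v: "v \<in> carrier_vec d" "v \<noteq> 0\<^sub>v d" using ev M unfolding eigenvector_def by auto
  have Mk: "M ^\<^sub>m k = map_mat complex_of_real (Y ^\<^sub>m k)"
    unfolding M_def by (rule of_real_hom.mat_hom_pow[OF Y, symmetric])
  define m where "m = Max ((\<lambda>j. norm (v $ j)) ` {..<d})"
  have fin: "finite ((\<lambda>j. norm (v $ j)) ` {..<d})" "(\<lambda>j. norm (v $ j)) ` {..<d} \<noteq> {}"
    using d by auto
  obtain i where i: "i < d" "norm (v $ i) = m" using Max_in[OF fin] unfolding m_def by auto
  have le_m: "\<And>j. j < d \<Longrightarrow> norm (v $ j) \<le> m" unfolding m_def using fin by auto
  obtain j where j: "j < d" "v $ j \<noteq> 0" using v by (auto simp: vec_eq_iff)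
  have m: "0 < m" using le_m[OF j(1)] j(2) by (meson less_le_trans zero_less_norm_iff)
  have "norm lam ^ k * m = norm ((M ^\<^sub>m k *\<^sub>v v) $ i)"
    using eigenvector_pow[OF M ev] i v by (simp add: norm_mult norm_power)
  also have "\<dots> = norm (\<Sum>l<d. complex_of_real ((Y ^\<^sub>m k) $$ (i,l)) * v $ l)"
    unfolding Mk using i v Y by (simp add: scalar_prod_def atLeast0LessThan)
  also have "\<dots> \<le> (\<Sum>l<d. norm (complex_of_real ((Y ^\<^sub>m k) $$ (i,l)) * v $ l))"
    by (rule norm_sum)
  also have "\<dots> \<le> (\<Sum>l<d. b * m)"
    using b i le_m by (intro sum_mono) (simp add: norm_mult mult_mono')
  finally show ?thesis using m r by simp
qed

lemma rho_smult_le: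
  assumes X: "X \<in> carrier_mat d d" and d: "0 < d" and c: "0 < c"
  shows "rho (c \<cdot>\<^sub>m X) \<le> c * rho X"
proof -
  define M where "M = map_mat complex_of_real X"
  have M: "M \<in> carrier_mat d d" using X unfolding M_def by auto
  have cM: "map_mat complex_of_real (c \<cdot>\<^sub>m X) = complex_of_real c \<cdot>\<^sub>m M"
    unfolding M_def by (rule eq_matI) auto
  obtain mu where "mu \<in> spectrum (complex_of_real c \<cdot>\<^sub>m M)" and r: "rho (c \<cdot>\<^sub>m X) = norm mu"
    using spectral_radius_mem_max(1)[OF smult_carrier_mat[OF M] d] unfolding rho_def cM by auto
  then obtain v where ev: "eigenvector (complex_of_real c \<cdot>\<^sub>m M) v mu"
    unfolding spectrum_def eigenvalue_def by auto
  have v: "v \<in> carrier_vec d" "v \<noteq> 0\<^sub>v d" and e: "(complex_of_real c \<cdot>\<^sub>m M) *\<^sub>v v = mu \<cdot>\<^sub>v v"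
    using ev M unfolding eigenvector_def by auto
  have "M *\<^sub>v v = (mu / complex_of_real c) \<cdot>\<^sub>v v"
  proof (rule eq_vecI)
    fix i assume i: "i < dim_vec ((mu / complex_of_real c) \<cdot>\<^sub>v v)"
    have "complex_of_real c * (M *\<^sub>v v) $ i = mu * v $ i"
      using arg_cong[OF e, of "\<lambda>w. w $ i"] i M v
      by (simp add: scalar_prod_def sum_distrib_left mult.assoc)
    then show "(M *\<^sub>v v) $ i = ((mu / complex_of_real c) \<cdot>\<^sub>v v) $ i"
      using i c by (simp add: field_simps)
  qed (use M v in auto)
  then have "eigenvector M v (mu / complex_of_real c)" using v M unfolding eigenvector_def by auto
  then have "norm (mu / complex_of_real c) \<le> rho X"
    using spectral_radius_mem_max(2)[OF M d] unfolding rho_def M_def[symmetric] spectrum_def eigenvalue_def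
    by auto
  then show ?thesis using r c by (simp add: norm_divide field_simps)
qed


lemma mat_pow_index_geometric_bound:
  assumes X: "X \<in> carrier_mat d d" and d: "0 < d" and r: "rho X < r"
  obtains c where "\<And>k i j. i < d \<Longrightarrow> j < d \<Longrightarrow> \<bar>(X ^\<^sub>m k) $$ (i,j)\<bar> \<le> c * r ^ k"
proof -
  have r0: "0 < r" using rho_nonneg[OF X d] r by simp
  define M where "M = (1/r) \<cdot>\<^sub>m X"
  have M: "M \<in> carrier_mat d d" using X unfolding M_def by auto
  have "rho M \<le> (1/r) * rho X" unfolding M_def using r0 by (intro rho_smult_le[OF X d]) auto
  also have "\<dots> < 1" using r r0 by (simp add: field_simps)
  finally have "spectral_radius (map_mat complex_of_real M) < 1" unfolding rho_def .
  from spectral_radius_jnf_norm_bound_less_1_upper_triangular[OF _ this] M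
  obtain c where c: "\<And>k. norm_bound (map_mat complex_of_real M ^\<^sub>m k) c" by auto
  show ?thesis
  proof
    fix k i j assume ij: "i < d" "j < d"
    have "norm ((map_mat complex_of_real M ^\<^sub>m k) $$ (i,j)) \<le> c"
      using c[of k] ij M unfolding norm_bound_def by auto
    then have "\<bar>(M ^\<^sub>m k) $$ (i,j)\<bar> \<le> c"
      unfolding of_real_hom.mat_hom_pow[OF M, symmetric] using ij M by simp
    then have "\<bar>(1/r)^k * (X ^\<^sub>m k) $$ (i,j)\<bar> \<le> c"
      unfolding M_def mat_pow_smult[OF X] using ij X by simp
    then have "(1/r)^k * \<bar>(X ^\<^sub>m k) $$ (i,j)\<bar> \<le> c" using r0 by (simp add: abs_mult)
    then show "\<bar>(X ^\<^sub>m k) $$ (i,j)\<bar> \<le> c * r ^ k" using r0 by (simp add: field_simps power_divide)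
  qed
qed

lemma rho_mono_nonneg:
  assumes X: "X \<in> carrier_mat d d" and Y: "Y \<in> carrier_mat d d" and d: "0 < d"
    and le: "\<And>a b. a < d \<Longrightarrow> b < d \<Longrightarrow> 0 \<le> Y $$ (a,b) \<and> Y $$ (a,b) \<le> X $$ (a,b)"
  shows "rho Y \<le> rho X"
proof (rule ccontr)
  assume "\<not> rho Y \<le> rho X"
  define r where "r = (rho X + rho Y) / 2"
  have r: "rho X < r" "r < rho Y" "0 < r"
    using \<open>\<not> rho Y \<le> rho X\<close> rho_nonneg[OF X d] unfolding r_def by auto
  obtain c where c: "\<And>k i j. i < d \<Longrightarrow> j < d \<Longrightarrow> \<bar>(X ^\<^sub>m k) $$ (i,j)\<bar> \<le> c * r ^ k"
    using mat_pow_index_geometric_bound[OF X d r(1)] by blast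
  have bound: "rho Y ^ k \<le> d * c * r ^ k" for k
  proof -
    have "rho Y ^ k \<le> d * (c * r ^ k)"
    proof (rule rho_pow_le_index_bound[OF Y d])
      fix i j assume ij: "i < d" "j < d"
      from mat_pow_index_mono[OF X Y le ij, of k] c[OF ij, of k]
      show "\<bar>(Y ^\<^sub>m k) $$ (i,j)\<bar> \<le> c * r ^ k" by linarith
    qed
    then show ?thesis by (simp add: mult.assoc)
  qed
  obtain n where "d * c < (rho Y / r) ^ n" using real_arch_pow[of "rho Y / r"] r by auto
  then have "d * c * r ^ n < rho Y ^ n" using r by (simp add: power_divide field_simps)
  with bound[of n] show False by simp
qed

lemma eventually_rho_less:
  assumes P: "\<And>t. P t \<in> carrier_mat d d" and L: "L \<in> carrier_mat d d" and d: "0 < d"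
    and lim: "\<And>a b. a < d \<Longrightarrow> b < d \<Longrightarrow> ((\<lambda>t. P t $$ (a,b)) \<longlongrightarrow> L $$ (a,b)) F"
    and r: "rho L < r"
  shows "\<forall>\<^sub>F t in F. rho (P t) < r"
proof -
  define s where "s = (rho L + r) / 2"
  have s: "rho L < s" "0 < s" "s < r" using r rho_nonneg[OF L d] unfolding s_def by auto
  obtain c where c: "\<And>k i j. i < d \<Longrightarrow> j < d \<Longrightarrow> \<bar>(L ^\<^sub>m k) $$ (i,j)\<bar> \<le> c * s ^ k"
    using mat_pow_index_geometric_bound[OF L d s(1)] by blast
  have c0: "0 \<le> c" using c[OF d d, of 0] by simp
  obtain k where k: "(s / r) ^ k < 1 / (2 * d * (c + 1))"
    using real_arch_pow_inv[of "1 / (2 * d * (c + 1))" "s / r"] s d c0 by auto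
  define eps where "eps = r ^ k / (2 * d)"
  have eps: "0 < eps" using s d unfolding eps_def by simp
  have D: "0 < 2 * d * (c + 1)" using d c0 by simp
  have "s ^ k < r ^ k / (2 * d * (c + 1))"
    using k s by (simp add: power_divide divide_less_eq)
  then have "s ^ k * (2 * d * (c + 1)) < r ^ k" by (simp only: pos_less_divide_eq[OF D])
  then have "d * (c + 1) * s ^ k < r ^ k / 2" by (simp add: algebra_simps)
  moreover have "d * c * s ^ k \<le> d * (c + 1) * s ^ k" using s by (intro mult_right_mono) (auto simp: distrib_left)
  moreover have "d * (c * s ^ k + eps) = d * c * s ^ k + r ^ k / 2"
    using d unfolding eps_def by (simp add: distrib_left)
  ultimately have small: "d * (c * s ^ k + eps) < r ^ k" by linarith
  have "\<forall>\<^sub>F t in F. \<forall>p\<in>{..<d}\<times>{..<d}. dist ((P t ^\<^sub>m k) $$ p) ((L ^\<^sub>m k) $$ p) < eps"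
    using tendsto_mat_pow_index[OF P L lim] eps by (intro eventually_ball_finite) (auto intro: tendstoD)
  then show ?thesis
  proof (rule eventually_mono)
    fix t assume near: "\<forall>p\<in>{..<d}\<times>{..<d}. dist ((P t ^\<^sub>m k) $$ p) ((L ^\<^sub>m k) $$ p) < eps"
    have "rho (P t) ^ k \<le> d * (c * s ^ k + eps)"
    proof (rule rho_pow_le_index_bound[OF P d])
      fix i j assume ij: "i < d" "j < d"
      have "\<bar>(P t ^\<^sub>m k) $$ (i,j) - (L ^\<^sub>m k) $$ (i,j)\<bar> < eps"
        using near ij by (auto simp: dist_real_def)
      with c[OF ij, of k] show "\<bar>(P t ^\<^sub>m k) $$ (i,j)\<bar> \<le> c * s ^ k + eps" by linarith
    qed
    with small have "rho (P t) ^ k < r ^ k" by linarith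
    moreover have "0 \<le> r" using s by linarith
    ultimately show "rho (P t) < r" by (rule power_less_imp_less_base)
  qed
qed

lemma nonneg_mat_segment:
  assumes X: "X \<in> carrier_mat d d" and B: "B \<in> carrier_mat d d"
    and "nonneg_mat X" and "nonneg_mat B" and t: "0 \<le> t" "t \<le> 1"
  shows "nonneg_mat (X + t \<cdot>\<^sub>m (B - X))"
  unfolding nonneg_mat_def
proof (intro allI impI)
  fix i j assume "i < dim_row (X + t \<cdot>\<^sub>m (B - X))" "j < dim_col (X + t \<cdot>\<^sub>m (B - X))"
  then have ij: "i < d" "j < d" using X by auto
  have "0 \<le> X $$ (i,j)" "0 \<le> B $$ (i,j)"
    using assms ij unfolding nonneg_mat_def by auto
  then have "0 \<le> (1 - t) * X $$ (i,j) + t * B $$ (i,j)" using t by simp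
  also have "\<dots> = (X + t \<cdot>\<^sub>m (B - X)) $$ (i,j)"
    using X B ij by (simp add: algebra_simps)
  finally show "0 \<le> (X + t \<cdot>\<^sub>m (B - X)) $$ (i,j)" .
qed

lemma feasible_P_nonneg_below:
  assumes X: "feasible_P d X" and Y: "Y \<in> carrier_mat d d"
    and le: "\<And>a b. a < d \<Longrightarrow> b < d \<Longrightarrow> 0 \<le> Y $$ (a,b) \<and> Y $$ (a,b) \<le> X $$ (a,b)"
  shows "feasible_P d Y"
proof (cases "d = 0")
  case True
  then have "Y = X" using X Y unfolding feasible_P_def by (intro eq_matI) auto
  with X show ?thesis by simp
next
  case False
  then have "rho Y \<le> rho X"
    using X Y le unfolding feasible_P_def by (intro rho_mono_nonneg) auto
  then show ?thesis using X Y le unfolding feasible_P_def nonneg_mat_def by auto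
qed

lemma local_min_P_no_descent_segment:
  assumes min: "local_min_P d A X" and B: "B \<in> carrier_mat d d"
    and descent: "\<forall>\<^sub>F t in at_right 0. feasible_P d (X + t \<cdot>\<^sub>m (B - X))
      \<and> frob_norm (X + t \<cdot>\<^sub>m (B - X) - A) < frob_norm (X - A)"
  shows False
proof -
  obtain e where X: "X \<in> carrier_mat d d" and e: "0 < e"
    and le: "\<And>Y. feasible_P d Y \<Longrightarrow> frob_norm (Y - X) < e \<Longrightarrow> frob_norm (X - A) \<le> frob_norm (Y - A)"
    using min unfolding local_min_P_def feasible_P_def by blast
  have dist: "frob_norm (X + t \<cdot>\<^sub>m (B - X) - X) = \<bar>t\<bar> * frob_norm (B - X)" for t
  proof -
    have "X + t \<cdot>\<^sub>m (B - X) - X = t \<cdot>\<^sub>m (B - X)" using X B by (intro eq_matI) auto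
    then show ?thesis by (simp add: frob_norm_smult)
  qed
  have "((\<lambda>t. \<bar>t\<bar> * frob_norm (B - X)) \<longlongrightarrow> \<bar>0\<bar> * frob_norm (B - X)) (at_right 0)"
    by (intro tendsto_intros)
  then have "\<forall>\<^sub>F t in at_right 0. \<bar>t\<bar> * frob_norm (B - X) < e"
    using e by (simp add: order_tendstoD(2))
  with descent have "\<forall>\<^sub>F t in at_right (0::real). False"
    by eventually_elim (use le dist in force)
  then show False by simp
qed

lemma local_min_P_le:
  assumes A: "A \<in> carrier_mat d d" "nonneg_mat A" and min: "local_min_P d A X"
    and ij: "i < d" "j < d"
  shows "X $$ (i,j) \<le> A $$ (i,j)"
proof (rule ccontr)
  assume "\<not> X $$ (i,j) \<le> A $$ (i,j)"
  then have gt: "0 < X $$ (i,j) - A $$ (i,j)" by simp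
  have feasible: "feasible_P d X" using min unfolding local_min_P_def by simp
  then have X: "X \<in> carrier_mat d d" "nonneg_mat X" unfolding feasible_P_def by auto
  define B where "B = mat d d (\<lambda>p. if p = (i,j) then A $$ p else X $$ p)"
  have B: "B \<in> carrier_mat d d" unfolding B_def by simp
  have entry: "(X + t \<cdot>\<^sub>m (B - X)) $$ (a,b) =
      (if (a,b) = (i,j) then X $$ (i,j) - t * (X $$ (i,j) - A $$ (i,j)) else X $$ (a,b))"
    if "a < d" "b < d" for t a b
    using that X B by (auto simp: B_def algebra_simps)
  have "feasible_P d (X + t \<cdot>\<^sub>m (B - X)) \<and> frob_norm (X + t \<cdot>\<^sub>m (B - X) - A) < frob_norm (X - A)"
    if t: "0 < t" "t < 1" for t
  proof
    show "feasible_P d (X + t \<cdot>\<^sub>m (B - X))"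
    proof (rule feasible_P_nonneg_below[OF feasible])
      fix a b assume ab: "a < d" "b < d"
      have nonneg: "0 \<le> X $$ (a,b)" "0 \<le> X $$ (i,j)" "0 \<le> A $$ (i,j)"
        using X(1,2) A ab ij unfolding nonneg_mat_def by auto
      have "0 \<le> (1 - t) * X $$ (i,j) + t * A $$ (i,j)"
        using nonneg t by (intro add_nonneg_nonneg mult_nonneg_nonneg) auto
      moreover have "0 \<le> t * (X $$ (i,j) - A $$ (i,j))" using gt t by simp
      ultimately show "0 \<le> (X + t \<cdot>\<^sub>m (B - X)) $$ (a,b) \<and> (X + t \<cdot>\<^sub>m (B - X)) $$ (a,b) \<le> X $$ (a,b)"
        unfolding entry[OF ab] using nonneg by (auto simp: algebra_simps)
    qed (use X B in auto)
    have diff: "(X + t \<cdot>\<^sub>m (B - X) - A) $$ (a,b) =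
        (if (a,b) = (i,j) then (1 - t) * (X - A) $$ (i,j) else (X - A) $$ (a,b))"
      if "a < d" "b < d" for a b
      using that X(1) A(1) by (simp add: B_def algebra_simps)
    show "frob_norm (X + t \<cdot>\<^sub>m (B - X) - A) < frob_norm (X - A)"
    proof (rule frob_norm_strict_mono[OF _ _ _ ij])
      show "\<bar>(X + t \<cdot>\<^sub>m (B - X) - A) $$ (a,b)\<bar> \<le> \<bar>(X - A) $$ (a,b)\<bar>" if "a < d" "b < d" for a b
        using t unfolding diff[OF that] by (simp add: abs_mult mult_left_le_one_le)
      show "\<bar>(X + t \<cdot>\<^sub>m (B - X) - A) $$ (i,j)\<bar> < \<bar>(X - A) $$ (i,j)\<bar>"
        using t gt ij X(1) A(1) unfolding diff[OF ij] by (simp add: abs_mult)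
    qed (use X(1) A(1) in auto)
  qed
  then have "\<forall>\<^sub>F t in at_right 0. feasible_P d (X + t \<cdot>\<^sub>m (B - X))
      \<and> frob_norm (X + t \<cdot>\<^sub>m (B - X) - A) < frob_norm (X - A)"
    using eventually_at_right_real[of "0::real" 1] by (simp add: eventually_mono)
  then show False by (rule local_min_P_no_descent_segment[OF min B])
qed

lemma local_min_P_rho_eq_1:
  assumes A: "A \<in> carrier_mat d d" "nonneg_mat A" "1 < rho A" and min: "local_min_P d A X"
  shows "rho X = 1"
proof (rule ccontr)
  have X: "X \<in> carrier_mat d d" "nonneg_mat X" "rho X \<le> 1"
    using min unfolding local_min_P_def feasible_P_def by auto
  assume "rho X \<noteq> 1"
  then have less: "rho X < 1" using X(3) by simp
  have "X \<noteq> A" using X(3) A(3) by auto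
  then obtain a b where ab: "a < d" "b < d" "X $$ (a,b) \<noteq> A $$ (a,b)"
    using X(1) A(1) by (auto simp: mat_eq_iff)
  have "\<forall>\<^sub>F t in at_right 0. rho (X + t \<cdot>\<^sub>m (A - X)) < 1"
  proof (rule eventually_rho_less[OF _ X(1) _ _ less])
    show "X + t \<cdot>\<^sub>m (A - X) \<in> carrier_mat d d" for t
      using X(1) A(1) by (intro add_carrier_mat smult_carrier_mat minus_carrier_mat)
    show "0 < d" using ab by simp
    fix i j assume ij: "i < d" "j < d"
    have "((\<lambda>t. X $$ (i,j) + t * (A $$ (i,j) - X $$ (i,j))) \<longlongrightarrow> X $$ (i,j) + 0 * (A $$ (i,j) - X $$ (i,j))) (at_right 0)"
      by (intro tendsto_intros)
    then show "((\<lambda>t. (X + t \<cdot>\<^sub>m (A - X)) $$ (i,j)) \<longlongrightarrow> X $$ (i,j)) (at_right 0)"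
      using ij X(1) A(1) by simp
  qed
  moreover have "\<forall>\<^sub>F t in at_right 0. t \<in> {0<..<(1::real)}" by (rule eventually_at_right_real) simp
  ultimately have "\<forall>\<^sub>F t in at_right 0. feasible_P d (X + t \<cdot>\<^sub>m (A - X))
      \<and> frob_norm (X + t \<cdot>\<^sub>m (A - X) - A) < frob_norm (X - A)"
  proof eventually_elim
    case (elim t)
    have diff: "(X + t \<cdot>\<^sub>m (A - X) - A) $$ (i,j) = (1 - t) * (X - A) $$ (i,j)"
      if "i < d" "j < d" for i j
      using that X(1) A(1) by (simp add: algebra_simps)
    have "frob_norm (X + t \<cdot>\<^sub>m (A - X) - A) < frob_norm (X - A)"
    proof (rule frob_norm_strict_mono[OF _ _ _ ab(1,2)])
      show "\<bar>(X + t \<cdot>\<^sub>m (A - X) - A) $$ (i,j)\<bar> \<le> \<bar>(X - A) $$ (i,j)\<bar>" if "i < d" "j < d" for i j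
        using elim unfolding diff[OF that] by (simp add: abs_mult mult_left_le_one_le)
      show "\<bar>(X + t \<cdot>\<^sub>m (A - X) - A) $$ (a,b)\<bar> < \<bar>(X - A) $$ (a,b)\<bar>"
        using elim ab X(1) A(1) unfolding diff[OF ab(1,2)] by (simp add: abs_mult)
    qed (use X(1) A(1) in auto)
    then show ?case
      using elim nonneg_mat_segment[OF X(1) A(1) X(2) A(2), of t] X(1)
      unfolding feasible_P_def by auto
  qed
  then show False by (rule local_min_P_no_descent_segment[OF min A(1)])
qed

theorem lemma3:
  fixes A X :: "real mat" and d :: nat
  assumes "A \<in> carrier_mat d d" and "nonneg_mat A" and "rho A > 1"
    and "local_min_P d A X"
  shows "(\<forall>i<d. \<forall>j<d. X $$ (i,j) \<le> A $$ (i,j)) \<and> rho X = 1"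
  using local_min_P_le[OF assms(1,2,4)] local_min_P_rho_eq_1[OF assms] by blast

end
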